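(* Let $A$ and $B$ be commutative groups. (a) If $B$ is trivial, then $\mathcal D(A,B)=\{-\infty\}$. (b) If $A$ is trivial and $B$ is nontrivial, then $\mathcal D(A,B)=\{-\infty,0\}$. (c) If $A$ and $B$ are both nontrivial, then $\mathcal D(A,B)\setminus\{\infty\}=\{n\in\{-\infty\}\cup\mathbb N: n\le\delta^\circ(A,B)\}$.
   Context: For commutative groups $A,B$, $B^A$ denotes the commutative group (under pointwise addition) of all maps $A\to B$. For $a\in A$, the difference operator $\Delta_a:B^A\to B^A$ is $(\Delta_a f)(x)=f(x+a)-f(x)$. Let $\widetilde{\mathbb N}=\mathbb N\cup\{-\infty,\infty\}$ ($\mathbb N=\{0,1,2,\dots\}$), totally ordered with $-\infty$ least and $\infty$ greatest. The functional degree $\operatorname{fdeg}(f)\in\widetilde{\mathbb N}$ of $f\in B^A$ is: $-\infty$ if $f=0$; otherwise the least $n\in\mathbb N$ such that $\Delta_{a_1}\cdots\Delta_{a_{n+1}}f=0$ for all $a_1,\dots,a_{n+1}\in A$; and $\infty$ if no such $n$ exists. $\mathcal D(A,B)=\{\operatorname{fdeg}(f):f\in B^A\}$, and $\delta^\circ(A,B)=\sup\{\operatorname{fdeg}(f): f\in B^A,\ \operatorname{fdeg}(f)<\infty\}$ (supremum in $\widetilde{\mathbb N}$). *)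

theory Defs
  imports Main "HOL-Library.Extended_Nat" "HOL-Library.Option_ord"
begin

text \<open>Extended naturals N u {-infinity, infinity}: None = -infinity, Some (enat n) = n,
  Some infinity = +infinity, with the order None < Some _ (Option_ord).\<close>
type_synonym xnat = "enat option"

abbreviation NegInf :: xnat where "NegInf \<equiv> None"
abbreviation PosInf :: xnat where "PosInf \<equiv> Some \<infinity>"
abbreviation Fin :: "nat \<Rightarrow> xnat" where "Fin n \<equiv> Some (enat n)"

definition Delta :: "'a::ab_group_add \<Rightarrow> ('a \<Rightarrow> 'b::ab_group_add) \<Rightarrow> ('a \<Rightarrow> 'b)" where
  "Delta a f = (\<lambda>x. f (x + a) - f x)"

definition Deltas :: "'a::ab_group_add list \<Rightarrow> ('a \<Rightarrow> 'b::ab_group_add) \<Rightarrow> ('a \<Rightarrow> 'b)" where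
  "Deltas as f = foldr Delta as f"

definition kills :: "nat \<Rightarrow> ('a::ab_group_add \<Rightarrow> 'b::ab_group_add) \<Rightarrow> bool" where
  "kills n f \<longleftrightarrow> (\<forall>as. length as = Suc n \<longrightarrow> Deltas as f = (\<lambda>_. 0))"

definition fdeg :: "('a::ab_group_add \<Rightarrow> 'b::ab_group_add) \<Rightarrow> xnat" where
  "fdeg f = (if f = (\<lambda>_. 0) then NegInf
             else if \<exists>n. kills n f then Fin (LEAST n. kills n f)
             else PosInf)"

definition Dset :: "'a::ab_group_add itself \<Rightarrow> 'b::ab_group_add itself \<Rightarrow> xnat set" where
  "Dset _ _ = range (fdeg :: ('a \<Rightarrow> 'b) \<Rightarrow> xnat)"

definition delta0 :: "'a::ab_group_add itself \<Rightarrow> 'b::ab_group_add itself \<Rightarrow> xnat" where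
  "delta0 _ _ = Sup {fdeg f | f :: 'a \<Rightarrow> 'b. fdeg f < PosInf}"

end

theory Submission
  imports Defs
begin

text \<open>Claim (c) holds for all commutative groups \<open>A\<close> and \<open>B\<close>. If \<open>fdeg f = n + 1\<close>, take \<open>n + 1\<close>
  differences not annihilating \<open>f\<close>; for their last one \<open>a\<close>, \<open>\<Delta>\<^sub>a f\<close> has degree exactly \<open>n\<close>. Hence
  the finite degrees form an initial segment of \<open>{-\<infinity>} \<union> \<nat>\<close>, and such a segment is determined
  by its supremum \<open>\<delta>\<degree>(A,B)\<close>.\<close>

lemma Deltas_Cons: "Deltas (a # as) f = Delta a (Deltas as f)"
  by (simp add: Deltas_def)

lemma Deltas_append_single: "Deltas (as @ [a]) f = Deltas as (Delta a f)"
  by (simp add: Deltas_def)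

lemma Deltas_zero: "Deltas as (\<lambda>_::'a::ab_group_add. 0 :: 'b::ab_group_add) = (\<lambda>_. 0)"
  by (induction as) (simp_all add: Deltas_def Delta_def)

lemma kills_0_iff: "kills 0 f \<longleftrightarrow> (\<forall>a. Delta a f = (\<lambda>_. 0))"
  by (auto simp: kills_def Deltas_def length_Suc_conv)

lemma kills_Suc: "kills n f \<Longrightarrow> kills (Suc n) f"
  unfolding kills_def
proof (intro allI impI)
  fix as :: "'a list"
  assume killed: "\<forall>as. length as = Suc n \<longrightarrow> Deltas as f = (\<lambda>_. 0)"
    and "length as = Suc (Suc n)"
  then obtain a bs where "as = a # bs" and "length bs = Suc n"
    by (cases as) auto
  with killed show "Deltas as f = (\<lambda>_. 0)"
    by (simp add: Deltas_Cons Delta_def)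
qed

lemma kills_mono: "kills n f \<Longrightarrow> n \<le> m \<Longrightarrow> kills m f"
proof (induction m)
  case (Suc m)
  then show ?case
    using kills_Suc by (cases "n = Suc m") auto
qed simp

lemma fdeg_eq_Fin_iff:
  "fdeg f = Fin n \<longleftrightarrow> f \<noteq> (\<lambda>_. 0) \<and> kills n f \<and> (\<forall>k<n. \<not> kills k f)"
proof
  assume "fdeg f = Fin n"
  then have nonzero: "f \<noteq> (\<lambda>_. 0)" and killed: "\<exists>n. kills n f"
    and least: "(LEAST n. kills n f) = n"
    by (auto simp: fdeg_def split: if_splits)
  show "f \<noteq> (\<lambda>_. 0) \<and> kills n f \<and> (\<forall>k<n. \<not> kills k f)"
    using nonzero LeastI_ex[OF killed] not_less_Least[of _ "\<lambda>n. kills n f"] least by auto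
next
  assume "f \<noteq> (\<lambda>_. 0) \<and> kills n f \<and> (\<forall>k<n. \<not> kills k f)"
  moreover from this have "(LEAST n. kills n f) = n"
    by (intro Least_equality) (auto simp: not_less[symmetric])
  ultimately show "fdeg f = Fin n"
    by (auto simp: fdeg_def)
qed

lemma fdeg_zero: "fdeg (\<lambda>_::'a::ab_group_add. 0 :: 'b::ab_group_add) = NegInf"
  by (simp add: fdeg_def)

lemma xnat_less_PosInf_iff: "(x :: xnat) < PosInf \<longleftrightarrow> x \<noteq> PosInf"
  by (cases x) (auto simp: less_le)

lemma fdeg_less_PosInf_iff: "fdeg f < PosInf \<longleftrightarrow> fdeg f = NegInf \<or> (\<exists>k. fdeg f = Fin k)"
  by (auto simp: fdeg_def)

lemma fdeg_const:
  assumes "c \<noteq> 0"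
  shows "fdeg (\<lambda>_::'a::ab_group_add. c :: 'b::ab_group_add) = Fin 0"
  using assms by (auto simp: fdeg_eq_Fin_iff kills_0_iff Delta_def fun_eq_iff)

lemma fdeg_Delta_of_fdeg_Suc:
  fixes f :: "'a::ab_group_add \<Rightarrow> 'b::ab_group_add"
  assumes "fdeg f = Fin (Suc n)"
  obtains a where "fdeg (Delta a f) = Fin n"
proof -
  from assms have killed: "kills (Suc n) f" and "\<not> kills n f"
    by (auto simp: fdeg_eq_Fin_iff)
  then obtain as where "length as = Suc n" and "Deltas as f \<noteq> (\<lambda>_. 0)"
    by (auto simp: kills_def)
  then obtain bs a where len: "length bs = n" and witness: "Deltas bs (Delta a f) \<noteq> (\<lambda>_. 0)"
    by (cases as rule: rev_cases) (auto simp: Deltas_append_single)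
  have "Delta a f \<noteq> (\<lambda>_. 0)"
    using witness Deltas_zero by metis
  moreover have "kills n (Delta a f)"
    using killed by (simp add: kills_def flip: Deltas_append_single)
  moreover have "\<not> kills k (Delta a f)" if "k < n" for k
  proof
    assume "kills k (Delta a f)"
    then have "kills (n - 1) (Delta a f)"
      by (rule kills_mono) (use that in auto)
    with len that witness show False
      by (simp add: kills_def)
  qed
  ultimately show thesis
    by (intro that[of a]) (simp add: fdeg_eq_Fin_iff)
qed

lemma fdeg_Fin_downward_closed:
  fixes f :: "'a::ab_group_add \<Rightarrow> 'b::ab_group_add"
  assumes "fdeg f = Fin m" and "k \<le> m"
  shows "\<exists>g :: 'a \<Rightarrow> 'b. fdeg g = Fin k"
  using assms
proof (induction m arbitrary: f)
  case (Suc m)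
  then show ?case
    by (cases "k = Suc m") (auto elim: fdeg_Delta_of_fdeg_Suc)
qed auto

lemma Fin_le_Sup_xnat:
  fixes S :: "xnat set"
  assumes "Fin k \<le> Sup S"
  shows "\<exists>x\<in>S. Fin k \<le> x"
proof (cases k)
  case 0
  have "\<not> S \<subseteq> {None}"
  proof
    assume "S \<subseteq> {None}"
    then have "Sup S \<le> Sup {None}"
      by (rule Sup_subset_mono)
    with assms show False
      using less_eq_option_None_is_None by fastforce
  qed
  then obtain e where "Some e \<in> S"
    by (metis option.exhaust singletonI subsetI)
  then show ?thesis
    using 0 by (metis less_eq_option_Some zero_enat_def zero_le)
next
  case (Suc j)
  have "Fin j < Fin k"
    using Suc by simp
  then have "Fin j < Sup S"
    using assms by (rule order.strict_trans2)
  then obtain x where "x \<in> S" and "Fin j < x"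
    by (auto simp: less_Sup_iff)
  moreover from \<open>Fin j < x\<close> have "Fin (Suc j) \<le> x"
    by (cases x) (auto simp: Suc_ile_eq)
  ultimately show ?thesis
    using Suc by blast
qed

lemma Dset_minus_PosInf:
  "Dset TYPE('a::ab_group_add) TYPE('b::ab_group_add) - {PosInf} =
     {n. (n = NegInf \<or> (\<exists>k. n = Fin k)) \<and> n \<le> delta0 TYPE('a) TYPE('b)}"
  (is "?D = ?I")
proof
  let ?S = "{fdeg f | f :: 'a \<Rightarrow> 'b. fdeg f < PosInf}"
  have delta0_eq: "delta0 TYPE('a) TYPE('b) = Sup ?S"
    by (simp add: delta0_def)
  show "?D \<subseteq> ?I"
  proof
    fix n assume "n \<in> ?D"
    then obtain f :: "'a \<Rightarrow> 'b" where "n = fdeg f" and "fdeg f < PosInf"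
      by (auto simp: Dset_def xnat_less_PosInf_iff)
    then show "n \<in> ?I"
      unfolding delta0_eq by (auto simp: fdeg_less_PosInf_iff intro: Sup_upper)
  qed
  show "?I \<subseteq> ?D"
  proof
    fix n assume n: "n \<in> ?I"
    have "\<exists>f :: 'a \<Rightarrow> 'b. fdeg f = n"
    proof (cases "n = NegInf")
      case True
      then show ?thesis
        using fdeg_zero by blast
    next
      case False
      with n obtain k where k: "n = Fin k" and "Fin k \<le> Sup ?S"
        by (auto simp: delta0_eq)
      then obtain f :: "'a \<Rightarrow> 'b" where "fdeg f < PosInf" and "Fin k \<le> fdeg f"
        by (auto dest: Fin_le_Sup_xnat)
      then obtain m where "fdeg f = Fin m" and "k \<le> m"
        by (auto simp: fdeg_less_PosInf_iff)
      then show ?thesis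
        using k fdeg_Fin_downward_closed by blast
    qed
    with n show "n \<in> ?D"
      by (auto simp: Dset_def)
  qed
qed

lemma Dset_trivial_codomain:
  assumes "(UNIV :: 'b::ab_group_add set) = {0}"
  shows "Dset TYPE('a::ab_group_add) TYPE('b) = {NegInf}"
proof -
  have "(f :: 'a \<Rightarrow> 'b) = (\<lambda>_. 0)" for f
    using assms by auto
  then show ?thesis
    by (auto simp: Dset_def fdeg_def)
qed

lemma Dset_trivial_domain:
  assumes "(UNIV :: 'a::ab_group_add set) = {0}" and "(UNIV :: 'b::ab_group_add set) \<noteq> {0}"
  shows "Dset TYPE('a) TYPE('b) = {NegInf, Fin 0}"
proof -
  from assms(2) obtain c :: 'b where "c \<noteq> 0"
    by auto
  have translation_trivial: "x + a = x" for x a :: 'a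
    using assms(1) by (metis UNIV_I add.right_neutral singletonD)
  have "kills 0 (f :: 'a \<Rightarrow> 'b)" for f
    by (simp add: kills_0_iff Delta_def translation_trivial)
  then have "fdeg (f :: 'a \<Rightarrow> 'b) \<in> {NegInf, Fin 0}" for f
    by (cases "f = (\<lambda>_. 0)") (auto simp: fdeg_zero fdeg_eq_Fin_iff)
  then have "range (fdeg :: ('a \<Rightarrow> 'b) \<Rightarrow> xnat) \<subseteq> {NegInf, Fin 0}"
    by (simp only: image_subset_iff) blast
  moreover have "NegInf \<in> range (fdeg :: ('a \<Rightarrow> 'b) \<Rightarrow> xnat)"
    by (metis fdeg_zero rangeI)
  moreover have "Fin 0 \<in> range (fdeg :: ('a \<Rightarrow> 'b) \<Rightarrow> xnat)"
    by (metis fdeg_const[OF \<open>c \<noteq> 0\<close>] rangeI)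
  ultimately show ?thesis
    unfolding Dset_def by blast
qed

theorem lemma2:
  shows "((UNIV :: 'b::ab_group_add set) = {0} \<longrightarrow>
            Dset TYPE('a::ab_group_add) TYPE('b) = {NegInf})
       \<and> ((UNIV :: 'a set) = {0} \<and> (UNIV :: 'b set) \<noteq> {0} \<longrightarrow>
            Dset TYPE('a) TYPE('b) = {NegInf, Fin 0})
       \<and> ((UNIV :: 'a set) \<noteq> {0} \<and> (UNIV :: 'b set) \<noteq> {0} \<longrightarrow>
            Dset TYPE('a) TYPE('b) - {PosInf} =
              {n. (n = NegInf \<or> (\<exists>k. n = Fin k)) \<and> n \<le> delta0 TYPE('a) TYPE('b)})"
proof (intro conjI impI)
  show "Dset TYPE('a) TYPE('b) = {NegInf}" if "(UNIV :: 'b set) = {0}"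
    using that by (rule Dset_trivial_codomain)
  show "Dset TYPE('a) TYPE('b) = {NegInf, Fin 0}"
    if "(UNIV :: 'a set) = {0} \<and> (UNIV :: 'b set) \<noteq> {0}"
    using that by (intro Dset_trivial_domain) simp_all
qed (rule Dset_minus_PosInf)

end
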